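(* There exists a chore allocation instance with two agents $N=\{1,2\}$ and two chores (with additive, nonpositive, normalized valuations $V_i(M)=-1$ and shares $s_1,s_2\in(0,1]$, $s_1+s_2=1$) such that for every allocation $\langle X_1,X_2\rangle$ of the chores there is an agent $i\in\{1,2\}$ with $V_i(X_i)\le \frac{4}{3}\mathsf{WMMS}_i$. In other words, no algorithm can guarantee every agent $i$ a value strictly larger than $\frac43\mathsf{WMMS}_i$; any algorithm has approximation ratio at least $\frac43$ for WMMS fairness.
   Context: A chore allocation instance consists of agents $N=\{1,\dots,n\}$, chores $M$, additive valuations $V_i$ with $V_i(\{j\})\le 0$, $V_i(M)=-1$, and shares $s_i\in(0,1]$ summing to $1$. An allocation is an ordered partition $\langle X_1,\dots,X_n\rangle$ of $M$ (bundles possibly empty). The weighted maxmin share is $\mathsf{WMMS}_i:=\max_{\langle Y_1,\dots,Y_n\rangle}\min_{k\in N}V_i(Y_k)\frac{s_i}{s_k}$, the maximum over all allocations. For $\alpha\ge1$, an allocation is $\alpha$-WMMS if $V_i(X_i)\ge\alpha\,\mathsf{WMMS}_i$ for all $i$. *)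

theory Defs
  imports Main "HOL.Real"
begin

definition val :: "('a \<Rightarrow> 'c \<Rightarrow> real) \<Rightarrow> 'a \<Rightarrow> 'c set \<Rightarrow> real" where
  "val v i X = (\<Sum>j\<in>X. v i j)"

definition chore_instance ::
  "'a set \<Rightarrow> 'c set \<Rightarrow> ('a \<Rightarrow> 'c \<Rightarrow> real) \<Rightarrow> ('a \<Rightarrow> real) \<Rightarrow> bool" where
  "chore_instance N M v s \<longleftrightarrow>
     finite N \<and> N \<noteq> {} \<and> finite M \<and>
     (\<forall>i\<in>N. \<forall>j\<in>M. v i j \<le> 0) \<and>
     (\<forall>i\<in>N. val v i M = -1) \<and>
     (\<forall>i\<in>N. 0 < s i \<and> s i \<le> 1) \<and>
     (\<Sum>i\<in>N. s i) = 1"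

definition is_allocation :: "'a set \<Rightarrow> 'c set \<Rightarrow> ('a \<Rightarrow> 'c set) \<Rightarrow> bool" where
  "is_allocation N M X \<longleftrightarrow>
     (\<forall>i\<in>N. X i \<subseteq> M) \<and> (\<Union>i\<in>N. X i) = M \<and>
     (\<forall>i\<in>N. \<forall>k\<in>N. i \<noteq> k \<longrightarrow> X i \<inter> X k = {})"

text \<open>Weighted maxmin share; the supremum ranges over a finite nonempty set of values,
  so it is the maximum.\<close>
definition WMMS ::
  "'a set \<Rightarrow> 'c set \<Rightarrow> ('a \<Rightarrow> 'c \<Rightarrow> real) \<Rightarrow> ('a \<Rightarrow> real) \<Rightarrow> 'a \<Rightarrow> real" where
  "WMMS N M v s i =
     Sup {Min ((\<lambda>k. val v i (Y k) * s i / s k) ` N) | Y. is_allocation N M Y}"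

end

theory Submission
  imports Defs
begin

text \<open>Agent 1 (share 1/4) values both chores at -1/2; agent 2 (share 3/4) values them at
  -1/4 and -3/4. Giving both chores to agent 2 shows WMMS_1 \<ge> -1/3, and splitting them
  shows WMMS_2 \<ge> -3/4. Hence whoever receives a chore is badly off: if agent 1 gets one,
  its value is at most -1/2 < 4/3 \<cdot> (-1/3); otherwise agent 2 gets both, with value
  -1 = 4/3 \<cdot> (-3/4).\<close>

lemma val_nonpos:
  assumes "\<forall>j\<in>X. v i j \<le> 0"
  shows "val v i X \<le> 0"
  unfolding val_def using assms by (simp add: sum_nonpos)

lemma allocation_bundle_subset:
  assumes "is_allocation N M Y" "k \<in> N"
  shows "Y k \<subseteq> M"
  using assms unfolding is_allocation_def by blast

lemma Min_weighted_le_WMMS: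
  assumes Y: "is_allocation N M Y"
    and nonpos: "\<forall>i\<in>N. \<forall>j\<in>M. v i j \<le> 0" and pos: "\<forall>k\<in>N. 0 < s k"
    and "finite N" "i \<in> N"
  shows "Min ((\<lambda>k. val v i (Y k) * s i / s k) ` N) \<le> WMMS N M v s i"
  unfolding WMMS_def
proof (rule cSup_upper)
  show "bdd_above {Min ((\<lambda>k. val v i (Z k) * s i / s k) ` N) | Z. is_allocation N M Z}"
  proof (rule bdd_aboveI[where M = 0], clarify)
    fix Z assume Z: "is_allocation N M Z"
    have "val v i (Z i) \<le> 0"
      using nonpos allocation_bundle_subset[OF Z \<open>i \<in> N\<close>] \<open>i \<in> N\<close>
      by (intro val_nonpos) blast
    then have "val v i (Z i) * s i / s i \<le> 0"
      using pos \<open>i \<in> N\<close> by simp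
    moreover have "Min ((\<lambda>k. val v i (Z k) * s i / s k) ` N) \<le> val v i (Z i) * s i / s i"
      using \<open>finite N\<close> \<open>i \<in> N\<close> by (intro Min_le) (auto intro: image_eqI[where x = i])
    ultimately show "Min ((\<lambda>k. val v i (Z k) * s i / s k) ` N) \<le> 0" by linarith
  qed
qed (use Y in blast)

lemma two_agent_allocation_other_gets_all:
  assumes "is_allocation {a, b} M X" "X a = {}"
  shows "X b = M"
  using assms unfolding is_allocation_def by auto

definition hard_v :: "nat \<Rightarrow> nat \<Rightarrow> real" where
  "hard_v i j = (if i = 1 then -1/2 else if j = 0 then -1/4 else -3/4)"

definition hard_s :: "nat \<Rightarrow> real" where
  "hard_s i = (if i = 1 then 1/4 else 3/4)"

lemma hard_chore_instance: "chore_instance {1,2} {0,1} hard_v hard_s"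
  unfolding chore_instance_def hard_v_def hard_s_def val_def by auto

lemma hard_WMMS_1: "-1/3 \<le> WMMS {1,2} {0,1} hard_v hard_s 1"
proof -
  let ?Y = "\<lambda>k::nat. if k = 1 then {} else {0,1::nat}"
  have "is_allocation {1,2} {0,1} ?Y" unfolding is_allocation_def by auto
  moreover have "Min ((\<lambda>k. val hard_v 1 (?Y k) * hard_s 1 / hard_s k) ` {1,2}) = -1/3"
    unfolding hard_v_def hard_s_def val_def by simp
  ultimately show ?thesis
    using Min_weighted_le_WMMS[of "{1,2}" "{0,1}" ?Y hard_v hard_s 1] hard_chore_instance
    unfolding chore_instance_def by simp
qed

lemma hard_WMMS_2: "-3/4 \<le> WMMS {1,2} {0,1} hard_v hard_s 2"
proof -
  let ?Y = "\<lambda>k::nat. if k = 1 then {0::nat} else {1}"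
  have "is_allocation {1,2} {0,1} ?Y" unfolding is_allocation_def by auto
  moreover have "Min ((\<lambda>k. val hard_v 2 (?Y k) * hard_s 2 / hard_s k) ` {1,2}) = -3/4"
    unfolding hard_v_def hard_s_def val_def by simp
  ultimately show ?thesis
    using Min_weighted_le_WMMS[of "{1,2}" "{0,1}" ?Y hard_v hard_s 2] hard_chore_instance
    unfolding chore_instance_def by simp
qed

lemma hard_val_1_nonempty:
  assumes "B \<subseteq> {0,1}" "B \<noteq> {}"
  shows "val hard_v 1 B \<le> -1/2"
proof -
  have "finite B" using assms(1) finite_subset by blast
  then have "1 \<le> card B" using assms(2) by (simp add: Suc_le_eq card_gt_0_iff)
  moreover have "val hard_v 1 B = - real (card B) / 2"
    unfolding hard_v_def val_def by simp
  ultimately show ?thesis by simp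
qed

lemma hard_no_good_allocation:
  assumes X: "is_allocation {1,2} {0,1} X"
  shows "\<exists>i\<in>{1,2}. val hard_v i (X i) \<le> 4/3 * WMMS {1,2} {0,1} hard_v hard_s i"
proof (cases "X 1 = {}")
  case True
  then have "X 2 = {0,1}" using two_agent_allocation_other_gets_all[OF X] by blast
  then have "val hard_v 2 (X 2) = -1" unfolding hard_v_def val_def by simp
  then show ?thesis using hard_WMMS_2 by force
next
  case False
  then have "val hard_v 1 (X 1) \<le> -1/2"
    using hard_val_1_nonempty allocation_bundle_subset[OF X] by blast
  then show ?thesis using hard_WMMS_1 by force
qed

theorem lemma3:
  shows "\<exists>(M::nat set) (v::nat \<Rightarrow> nat \<Rightarrow> real) (s::nat \<Rightarrow> real).
           card M = 2 \<and> chore_instance {1,2} M v s \<and>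
           (\<forall>X. is_allocation {1,2} M X \<longrightarrow>
              (\<exists>i\<in>{1,2}. val v i (X i) \<le> 4/3 * WMMS {1,2} M v s i))"
proof (intro exI conjI allI impI)
  show "card {0, 1 :: nat} = 2" by simp
qed (fact hard_chore_instance, fact hard_no_good_allocation)

end
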